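(* Under the setting and assumptions 1–3 of the \textsc{MeritFed} process described below, with $\gamma\le\frac{1}{2L}$, every iterate satisfies the one-step descent inequality $$\mathbb{E}[f(x^{t+1})]\le\mathbb{E}[f(x^t)]-\frac{\gamma}{2}\mathbb{E}\|\nabla f(x^t)\|^2+\frac{\gamma^2L\sigma^2}{G}+\delta .$$ Setting: $f:\mathbb{R}^d\to\mathbb{R}$, ${\cal G}\subseteq[n]$ nonempty with $G=|{\cal G}|$, and $x^{t+1}=x^t-\gamma\sum_{i=1}^n w_i^{t+1}g_i^t$ with $w^{t+1}\in\Delta_1^n$, where (1) for $i\in{\cal G}$, $\mathbb{E}[g_i^t\mid x^t]=\nabla f(x^t)$, $\mathbb{E}[\|g_i^t-\nabla f(x^t)\|^2\mid x^t]\le\sigma^2$, with the noises $g_i^t-\nabla f(x^t)$, $i\in{\cal G}$, conditionally independent given $x^t$, while $g_i^t$ for $i\notin{\cal G}$ are arbitrary; (2) $f$ is $L$-smooth, i.e. $f(x)\le f(y)+\langle\nabla f(y),x-y\rangle+\frac L2\|x-y\|^2$ for all $x,y$; (3) $\mathbb{E}[f(x^{t+1})\mid x^t,\{g_i^t\}_{i=1}^n]-\min_{w\in\Delta_1^n}f(x^t-\gamma\sum_{i=1}^n w_ig_i^t)\le\delta$.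
   Context: $\Delta_1^n=\{w\in\mathbb{R}^n:\sum_i w_i=1,\ w_i\ge 0\}$ is the unit simplex; $\|\cdot\|$ is the Euclidean norm; $\gamma>0$ is the stepsize and $\delta\ge0$ the accuracy with which the server's weight-selection subproblem is solved. *)

theory Defs
  imports "HOL-Probability.Probability"
begin

text \<open>Unit unit_simplex in R^n, vectors indexed by 1..n (coordinates outside 1..n are irrelevant).\<close>
definition unit_simplex :: "nat \<Rightarrow> (nat \<Rightarrow> real) set" where
  "unit_simplex n = {v. (\<forall>i\<in>{1..n}. 0 \<le> v i) \<and> (\<Sum>i=1..n. v i) = 1}"

definition gen_sigma :: "'a measure \<Rightarrow> ('a \<Rightarrow> 'b::topological_space) set \<Rightarrow> 'a measure" where
  "gen_sigma M Xs = sigma (space M) {X -` A \<inter> space M | X A. X \<in> Xs \<and> A \<in> sets borel}"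

definition cond_indep_vars ::
  "'a measure \<Rightarrow> 'a measure \<Rightarrow> ('i \<Rightarrow> 'a \<Rightarrow> 'b::topological_space) \<Rightarrow> 'i set \<Rightarrow> bool" where
  "cond_indep_vars M F xi I \<longleftrightarrow>
     (\<forall>J A. J \<subseteq> I \<longrightarrow> finite J \<longrightarrow> (\<forall>j\<in>J. A j \<in> sets borel) \<longrightarrow>
       (AE \<omega> in M. real_cond_exp M F (\<lambda>\<omega>. \<Prod>j\<in>J. indicator (A j) (xi j \<omega>)) \<omega>
                   = (\<Prod>j\<in>J. real_cond_exp M F (\<lambda>\<omega>. indicator (A j) (xi j \<omega>)) \<omega>)))"

end

theory Submission
  imports Defs
begin

text \<open>Compare the server's step with plain averaging over the good clients. Since the weights are
  optimal up to delta, the conditional mean of f(x_{t+1}) exceeds f(x_t - gamma (grad f(x_t) + eta))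
  by at most delta, where eta is the average of the G good noises, and L-smoothness bounds the latter
  by a quadratic in grad f(x_t) and eta. Given x_t the good noises are centred and conditionally
  independent, so eta is uncorrelated with grad f(x_t) and the cross terms of |eta|^2 vanish, leaving
  E |eta|^2 <= sigma^2 / G. Finally gamma <= 1/(2L) makes the coefficient of |grad f(x_t)|^2 at
  most -gamma/2.\<close>

section \<open>Square-integrable random vectors\<close>

lemma abs_mult_le_sum_squares: "\<bar>x * y\<bar> \<le> x\<^sup>2 + (y::real)\<^sup>2"
proof -
  have "2 * \<bar>x\<bar> * \<bar>y\<bar> \<le> x\<^sup>2 + y\<^sup>2"
    using sum_squares_bound[of "\<bar>x\<bar>" "\<bar>y\<bar>"] by simp
  moreover have "0 \<le> \<bar>x\<bar> * \<bar>y\<bar>" by simp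
  ultimately show ?thesis unfolding abs_mult by linarith
qed

lemma abs_inner_le_sum_norm_squares: "\<bar>u \<bullet> v\<bar> \<le> (norm u)\<^sup>2 + (norm (v::'v::real_inner))\<^sup>2"
  using Cauchy_Schwarz_ineq2[of u v] abs_mult_le_sum_squares[of "norm u" "norm v"] by simp

lemma integrable_inner_square_integrable:
  fixes u v :: "'a \<Rightarrow> 'v::euclidean_space"
  assumes [measurable]: "u \<in> borel_measurable M" "v \<in> borel_measurable M"
    and "integrable M (\<lambda>\<omega>. (norm (u \<omega>))\<^sup>2)" "integrable M (\<lambda>\<omega>. (norm (v \<omega>))\<^sup>2)"
  shows "integrable M (\<lambda>\<omega>. u \<omega> \<bullet> v \<omega>)"
  by (rule Bochner_Integration.integrable_bound[where f = "\<lambda>\<omega>. (norm (u \<omega>))\<^sup>2 + (norm (v \<omega>))\<^sup>2"])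
     (use assms abs_inner_le_sum_norm_squares in auto)

lemma integrable_inner_Basis_mult_square_integrable:
  fixes u v :: "'a \<Rightarrow> 'v::euclidean_space"
  assumes [measurable]: "u \<in> borel_measurable M" "v \<in> borel_measurable M"
    and "integrable M (\<lambda>\<omega>. (norm (u \<omega>))\<^sup>2)" "integrable M (\<lambda>\<omega>. (norm (v \<omega>))\<^sup>2)"
    and b: "b \<in> Basis"
  shows "integrable M (\<lambda>\<omega>. (u \<omega> \<bullet> b) * (v \<omega> \<bullet> b))"
proof (rule Bochner_Integration.integrable_bound[where f = "\<lambda>\<omega>. (norm (u \<omega>))\<^sup>2 + (norm (v \<omega>))\<^sup>2"])
  have "(y \<bullet> b)\<^sup>2 \<le> (norm y)\<^sup>2" for y :: 'v
    using Basis_le_norm[OF b, of y] by (metis abs_ge_zero power2_abs power_mono)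
  then show "AE \<omega> in M. norm ((u \<omega> \<bullet> b) * (v \<omega> \<bullet> b)) \<le> norm ((norm (u \<omega>))\<^sup>2 + (norm (v \<omega>))\<^sup>2)"
    using abs_mult_le_sum_squares by (intro AE_I2) (smt (verit) real_norm_def)
qed (use assms in auto)

lemma integrable_norm_diff_square_integrable:
  fixes u v :: "'a \<Rightarrow> 'v::euclidean_space"
  assumes [measurable]: "u \<in> borel_measurable M" "v \<in> borel_measurable M"
    and "integrable M (\<lambda>\<omega>. (norm (u \<omega>))\<^sup>2)" "integrable M (\<lambda>\<omega>. (norm (v \<omega>))\<^sup>2)"
  shows "integrable M (\<lambda>\<omega>. (norm (u \<omega> - v \<omega>))\<^sup>2)"
proof -
  have "(norm (u \<omega> - v \<omega>))\<^sup>2 = (norm (u \<omega>))\<^sup>2 - 2 * (u \<omega> \<bullet> v \<omega>) + (norm (v \<omega>))\<^sup>2" for \<omega>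
    by (simp add: power2_norm_eq_inner inner_diff inner_commute)
  then show ?thesis
    using assms integrable_inner_square_integrable[OF assms] by simp
qed

lemma integral_inner_eq_sum_Basis:
  fixes u v :: "'a \<Rightarrow> 'v::euclidean_space"
  assumes "\<And>b. b \<in> Basis \<Longrightarrow> integrable M (\<lambda>\<omega>. (u \<omega> \<bullet> b) * (v \<omega> \<bullet> b))"
  shows "(\<integral>\<omega>. u \<omega> \<bullet> v \<omega> \<partial>M) = (\<Sum>b\<in>Basis. \<integral>\<omega>. (u \<omega> \<bullet> b) * (v \<omega> \<bullet> b) \<partial>M)"
proof -
  have "(\<integral>\<omega>. u \<omega> \<bullet> v \<omega> \<partial>M) = (\<integral>\<omega>. (\<Sum>b\<in>Basis. (u \<omega> \<bullet> b) * (v \<omega> \<bullet> b)) \<partial>M)"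
    by (intro Bochner_Integration.integral_cong refl euclidean_inner)
  then show ?thesis
    using assms by (simp add: Bochner_Integration.integral_sum)
qed

lemma norm_sum_squared: "(norm (\<Sum>i\<in>I. u i))\<^sup>2 = (\<Sum>i\<in>I. \<Sum>j\<in>I. u i \<bullet> (u j :: 'v::real_inner))"
proof -
  have "(norm (\<Sum>i\<in>I. u i))\<^sup>2 = (\<Sum>i\<in>I. u i \<bullet> (\<Sum>j\<in>I. u j))"
    by (simp add: power2_norm_eq_inner inner_sum_left)
  then show ?thesis
    by (simp add: inner_sum_right)
qed

lemma integral_norm_sum_squared_le:
  fixes \<xi> :: "'i \<Rightarrow> 'a \<Rightarrow> 'v::euclidean_space" and c :: real
  assumes "finite I"
    and [measurable]: "\<And>i. i \<in> I \<Longrightarrow> \<xi> i \<in> borel_measurable M"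
    and square_integrable: "\<And>i. i \<in> I \<Longrightarrow> integrable M (\<lambda>\<omega>. (norm (\<xi> i \<omega>))\<^sup>2)"
    and uncorrelated: "\<And>i j. i \<in> I \<Longrightarrow> j \<in> I \<Longrightarrow> i \<noteq> j \<Longrightarrow> (\<integral>\<omega>. \<xi> i \<omega> \<bullet> \<xi> j \<omega> \<partial>M) = 0"
    and variance: "\<And>i. i \<in> I \<Longrightarrow> (\<integral>\<omega>. (norm (\<xi> i \<omega>))\<^sup>2 \<partial>M) \<le> c"
  shows "integrable M (\<lambda>\<omega>. (norm (\<Sum>i\<in>I. \<xi> i \<omega>))\<^sup>2)"
    and "(\<integral>\<omega>. (norm (\<Sum>i\<in>I. \<xi> i \<omega>))\<^sup>2 \<partial>M) \<le> card I * c"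
proof -
  have integrable: "integrable M (\<lambda>\<omega>. \<xi> i \<omega> \<bullet> \<xi> j \<omega>)" if "i \<in> I" "j \<in> I" for i j
    using that by (intro integrable_inner_square_integrable square_integrable) auto
  then show "integrable M (\<lambda>\<omega>. (norm (\<Sum>i\<in>I. \<xi> i \<omega>))\<^sup>2)"
    unfolding norm_sum_squared by auto
  have "(\<integral>\<omega>. (norm (\<Sum>i\<in>I. \<xi> i \<omega>))\<^sup>2 \<partial>M) = (\<Sum>i\<in>I. \<Sum>j\<in>I. \<integral>\<omega>. \<xi> i \<omega> \<bullet> \<xi> j \<omega> \<partial>M)"
    unfolding norm_sum_squared using integrable
    by (simp add: Bochner_Integration.integral_sum Bochner_Integration.integrable_sum)
  also have "\<dots> = (\<Sum>i\<in>I. \<integral>\<omega>. (norm (\<xi> i \<omega>))\<^sup>2 \<partial>M)"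
  proof (rule sum.cong[OF refl])
    fix i assume "i \<in> I"
    then have "\<forall>j\<in>I - {i}. (\<integral>\<omega>. \<xi> i \<omega> \<bullet> \<xi> j \<omega> \<partial>M) = 0"
      using uncorrelated by auto
    then show "(\<Sum>j\<in>I. \<integral>\<omega>. \<xi> i \<omega> \<bullet> \<xi> j \<omega> \<partial>M) = (\<integral>\<omega>. (norm (\<xi> i \<omega>))\<^sup>2 \<partial>M)"
      by (simp add: sum.remove[OF \<open>finite I\<close> \<open>i \<in> I\<close>] power2_norm_eq_inner)
  qed
  also have "\<dots> \<le> card I * c"
    using sum_mono[OF variance] by simp
  finally show "(\<integral>\<omega>. (norm (\<Sum>i\<in>I. \<xi> i \<omega>))\<^sup>2 \<partial>M) \<le> card I * c" .
qed

section \<open>Conditional expectations and conditional independence\<close>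

lemma integral_mult_eq_if_indicator_integrals_eq:
  fixes Z U V :: "'a \<Rightarrow> real"
  assumes [measurable]: "Z \<in> borel_measurable M" "U \<in> borel_measurable M" "V \<in> borel_measurable M"
    and U_nonneg: "AE \<omega> in M. 0 \<le> U \<omega>" and V_nonneg: "AE \<omega> in M. 0 \<le> V \<omega>"
    and "integrable M U" "integrable M V"
    and indicator_eq: "\<And>A. A \<in> sets borel \<Longrightarrow>
       (\<integral>\<omega>. indicator A (Z \<omega>) * U \<omega> \<partial>M) = (\<integral>\<omega>. indicator A (Z \<omega>) * V \<omega> \<partial>M)"
  shows "(\<integral>\<omega>. Z \<omega> * U \<omega> \<partial>M) = (\<integral>\<omega>. Z \<omega> * V \<omega> \<partial>M)"
proof -
  have emeasure_eq: "emeasure (density M W) (Z -` A \<inter> space M) = ennreal (\<integral>\<omega>. indicator A (Z \<omega>) * W \<omega> \<partial>M)"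
    if [measurable]: "A \<in> sets borel" "W \<in> borel_measurable M"
      and "AE \<omega> in M. 0 \<le> W \<omega>" "integrable M W" for A W
  proof -
    have integrable: "integrable M (\<lambda>\<omega>. indicator A (Z \<omega>) * W \<omega>)"
      by (rule Bochner_Integration.integrable_bound[OF \<open>integrable M W\<close>]) (auto simp: indicator_def)
    have "emeasure (density M W) (Z -` A \<inter> space M) = (\<integral>\<^sup>+ \<omega>. ennreal (indicator A (Z \<omega>) * W \<omega>) \<partial>M)"
      by (subst emeasure_density) (auto intro!: nn_integral_cong simp: indicator_def)
    also have "\<dots> = ennreal (\<integral>\<omega>. indicator A (Z \<omega>) * W \<omega> \<partial>M)"
      by (rule nn_integral_eq_integral) (use that integrable in auto)
    finally show ?thesis .
  qed
  have "distr (density M U) borel Z = distr (density M V) borel Z"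
    by (rule measure_eqI) (simp_all add: emeasure_distr emeasure_eq indicator_eq assms)
  moreover have "(\<integral>\<omega>. Z \<omega> * W \<omega> \<partial>M) = integral\<^sup>L (distr (density M W) borel Z) (\<lambda>t. t)"
    if [measurable]: "W \<in> borel_measurable M" and "AE \<omega> in M. 0 \<le> W \<omega>" for W
    by (subst integral_distr) (use that in \<open>auto simp: integral_density mult.commute\<close>)
  ultimately show ?thesis
    using U_nonneg V_nonneg by simp
qed

lemma space_gen_sigma [simp]: "space (gen_sigma M Xs) = space M"
  unfolding gen_sigma_def by (rule space_measure_of) auto

lemma measurable_gen_sigma:
  assumes "X \<in> Xs"
  shows "X \<in> borel_measurable (gen_sigma M Xs)"
proof (rule measurableI)
  fix A :: "'b set" assume "A \<in> sets borel"
  then have "X -` A \<inter> space M \<in> sigma_sets (space M) {X -` A \<inter> space M | X A. X \<in> Xs \<and> A \<in> sets borel}"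
    using assms by (intro sigma_sets.Basic) auto
  then show "X -` A \<inter> space (gen_sigma M Xs) \<in> sets (gen_sigma M Xs)"
    unfolding space_gen_sigma unfolding gen_sigma_def by (subst sets_measure_of) auto
qed auto

lemma (in finite_measure) finite_measure_subalgebra_gen_sigma:
  assumes "\<And>X. X \<in> Xs \<Longrightarrow> X \<in> borel_measurable M"
  shows "finite_measure_subalgebra M (gen_sigma M Xs)"
proof -
  have generators: "{X -` A \<inter> space M | X A. X \<in> Xs \<and> A \<in> sets (borel :: 'b measure)} \<subseteq> sets M"
    using assms by auto
  then have "sets (gen_sigma M Xs) \<subseteq> sets M"
    unfolding gen_sigma_def by (subst sets_measure_of) (use sets.sigma_sets_subset[OF generators] in auto)
  then show ?thesis
    by unfold_locales (simp add: subalgebra_def)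
qed

lemma (in finite_measure) integrable_indicator_comp:
  assumes "Y \<in> borel_measurable M" "B \<in> sets borel"
  shows "integrable M (\<lambda>\<omega>. indicator B (Y \<omega>) :: real)"
  by (rule integrable_const_bound[where B = 1]) (use assms in \<open>auto split: split_indicator\<close>)

context finite_measure_subalgebra
begin

lemma integral_le_if_real_cond_exp_le:
  assumes "integrable M X" "integrable M Y" "AE \<omega> in M. real_cond_exp M F X \<omega> \<le> Y \<omega>"
  shows "(\<integral>\<omega>. X \<omega> \<partial>M) \<le> (\<integral>\<omega>. Y \<omega> \<partial>M)"
  using integral_mono_AE[OF real_cond_exp_int(1) _ assms(3)] assms real_cond_exp_int(2) by auto

lemma integral_mult_eq_0_if_real_cond_exp_eq_0:
  assumes [measurable]: "Z \<in> borel_measurable F" "X \<in> borel_measurable M"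
    and "integrable M (\<lambda>\<omega>. Z \<omega> * X \<omega>)" and "AE \<omega> in M. real_cond_exp M F X \<omega> = 0"
  shows "(\<integral>\<omega>. Z \<omega> * X \<omega> \<partial>M) = 0"
proof -
  have [measurable]: "Z \<in> borel_measurable M"
    by (rule measurable_from_subalg[OF subalg assms(1)])
  have "(\<integral>\<omega>. Z \<omega> * X \<omega> \<partial>M) = (\<integral>\<omega>. Z \<omega> * real_cond_exp M F X \<omega> \<partial>M)"
    using real_cond_exp_intg(2)[OF assms(3)] by simp
  also have "\<dots> = 0"
    by (subst integral_cong_AE[where g = "\<lambda>_. 0"]) (use assms(4) in auto)
  finally show ?thesis .
qed

lemma real_cond_exp_indicator_nonneg_le_1:
  assumes [measurable]: "Y \<in> borel_measurable M" "B \<in> sets borel"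
  shows "AE \<omega> in M. 0 \<le> real_cond_exp M F (\<lambda>\<omega>. indicator B (Y \<omega>)) \<omega>
                     \<and> real_cond_exp M F (\<lambda>\<omega>. indicator B (Y \<omega>)) \<omega> \<le> 1"
proof -
  have "AE \<omega> in M. 0 \<le> real_cond_exp M F (\<lambda>\<omega>. indicator B (Y \<omega>)) \<omega>"
    by (rule real_cond_exp_pos) auto
  moreover have "AE \<omega> in M. real_cond_exp M F (\<lambda>\<omega>. indicator B (Y \<omega>)) \<omega> \<le> 1"
    by (rule real_cond_exp_le_c[OF integrable_indicator_comp]) (auto split: split_indicator)
  ultimately show ?thesis
    by eventually_elim simp
qed

lemma integral_indicator_mult_eq_if_cond_indep:
  fixes X Y :: "'a \<Rightarrow> real"
  assumes [measurable]: "X \<in> borel_measurable M" "Y \<in> borel_measurable M" "A \<in> sets borel" "B \<in> sets borel"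
    and cond_indep: "AE \<omega> in M. real_cond_exp M F (\<lambda>\<omega>. indicator A (X \<omega>) * indicator B (Y \<omega>)) \<omega>
        = real_cond_exp M F (\<lambda>\<omega>. indicator A (X \<omega>)) \<omega> * real_cond_exp M F (\<lambda>\<omega>. indicator B (Y \<omega>)) \<omega>"
  shows "(\<integral>\<omega>. indicator A (X \<omega>) * indicator B (Y \<omega>) \<partial>M)
    = (\<integral>\<omega>. indicator A (X \<omega>) * real_cond_exp M F (\<lambda>\<omega>. indicator B (Y \<omega>)) \<omega> \<partial>M)"
proof -
  define p where "p = real_cond_exp M F (\<lambda>\<omega>. indicator B (Y \<omega>))"
  have [measurable]: "p \<in> borel_measurable F"
    unfolding p_def by auto
  have "integrable M (\<lambda>\<omega>. indicator A (X \<omega>) * indicator B (Y \<omega>) :: real)"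
    by (rule integrable_const_bound[where B = 1]) (auto split: split_indicator)
  then have "(\<integral>\<omega>. indicator A (X \<omega>) * indicator B (Y \<omega>) \<partial>M)
      = (\<integral>\<omega>. real_cond_exp M F (\<lambda>\<omega>. indicator A (X \<omega>) * indicator B (Y \<omega>)) \<omega> \<partial>M)"
    by (rule real_cond_exp_int(2)[symmetric])
  also have "\<dots> = (\<integral>\<omega>. p \<omega> * real_cond_exp M F (\<lambda>\<omega>. indicator A (X \<omega>)) \<omega> \<partial>M)"
    by (rule integral_cong_AE) (use cond_indep in \<open>auto simp: p_def\<close>)
  also have "\<dots> = (\<integral>\<omega>. p \<omega> * indicator A (X \<omega>) \<partial>M)"
  proof (rule real_cond_exp_intg(2))
    show "integrable M (\<lambda>\<omega>. p \<omega> * indicator A (X \<omega>))"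
      by (rule integrable_const_bound[where B = 1])
         (use real_cond_exp_indicator_nonneg_le_1[of Y B] in \<open>auto simp: p_def split: split_indicator\<close>)
  qed auto
  finally show ?thesis
    by (simp add: p_def mult.commute)
qed

text \<open>By conditional independence the densities 1_B(Y) and P(Y \<in> B | F) give X the same law, hence
  the same mean; the latter mean vanishes because X is conditionally centred.\<close>

lemma integral_indicator_mult_eq_0_if_cond_indep:
  fixes X Y :: "'a \<Rightarrow> real"
  assumes [measurable]: "X \<in> borel_measurable M" "Y \<in> borel_measurable M" "B \<in> sets borel"
    and "integrable M X" and centred: "AE \<omega> in M. real_cond_exp M F X \<omega> = 0"
    and cond_indep: "\<And>A. A \<in> sets borel \<Longrightarrow>
      AE \<omega> in M. real_cond_exp M F (\<lambda>\<omega>. indicator A (X \<omega>) * indicator B (Y \<omega>)) \<omega>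
        = real_cond_exp M F (\<lambda>\<omega>. indicator A (X \<omega>)) \<omega> * real_cond_exp M F (\<lambda>\<omega>. indicator B (Y \<omega>)) \<omega>"
  shows "(\<integral>\<omega>. indicator B (Y \<omega>) * X \<omega> \<partial>M) = 0"
proof -
  define p where "p = real_cond_exp M F (\<lambda>\<omega>. indicator B (Y \<omega>))"
  have [measurable]: "p \<in> borel_measurable F" "p \<in> borel_measurable M"
    unfolding p_def by auto
  have p_bounds: "AE \<omega> in M. 0 \<le> p \<omega> \<and> p \<omega> \<le> 1"
    unfolding p_def by (rule real_cond_exp_indicator_nonneg_le_1) auto
  then have p_nonneg: "AE \<omega> in M. 0 \<le> p \<omega>" and p_abs_le_1: "AE \<omega> in M. \<bar>p \<omega>\<bar> \<le> 1"
    by (eventually_elim, simp)+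
  have integrable_p: "integrable M p"
    by (rule integrable_const_bound[where B = 1]) (use p_abs_le_1 in auto)
  have indicator_eq: "(\<integral>\<omega>. indicator A (X \<omega>) * indicator B (Y \<omega>) \<partial>M) = (\<integral>\<omega>. indicator A (X \<omega>) * p \<omega> \<partial>M)"
    if "A \<in> sets borel" for A
    unfolding p_def using that by (intro integral_indicator_mult_eq_if_cond_indep cond_indep) auto
  have "(\<integral>\<omega>. X \<omega> * indicator B (Y \<omega>) \<partial>M) = (\<integral>\<omega>. X \<omega> * p \<omega> \<partial>M)"
    by (rule integral_mult_eq_if_indicator_integrals_eq
        [OF _ _ _ _ p_nonneg integrable_indicator_comp integrable_p indicator_eq]) auto
  also have "\<dots> = 0"
  proof -
    have "integrable M (\<lambda>\<omega>. p \<omega> * X \<omega>)"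
      by (rule Bochner_Integration.integrable_bound[OF \<open>integrable M X\<close>])
         (use p_abs_le_1 in \<open>auto simp: abs_mult intro!: mult_left_le_one_le\<close>)
    then show ?thesis
      using integral_mult_eq_0_if_real_cond_exp_eq_0[of p X] centred by (simp add: mult.commute)
  qed
  finally show ?thesis
    by (simp add: mult.commute)
qed

text \<open>Used as densities, the positive and negative parts of X give Y the same law, hence the same
  mean.\<close>

lemma integral_mult_eq_0_if_cond_indep:
  fixes X Y :: "'a \<Rightarrow> real"
  assumes [measurable]: "X \<in> borel_measurable M" "Y \<in> borel_measurable M"
    and "integrable M X" and integrable_XY: "integrable M (\<lambda>\<omega>. X \<omega> * Y \<omega>)"
    and centred: "AE \<omega> in M. real_cond_exp M F X \<omega> = 0"
    and cond_indep: "\<And>A B. A \<in> sets borel \<Longrightarrow> B \<in> sets borel \<Longrightarrow>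
      AE \<omega> in M. real_cond_exp M F (\<lambda>\<omega>. indicator A (X \<omega>) * indicator B (Y \<omega>)) \<omega>
        = real_cond_exp M F (\<lambda>\<omega>. indicator A (X \<omega>)) \<omega> * real_cond_exp M F (\<lambda>\<omega>. indicator B (Y \<omega>)) \<omega>"
  shows "(\<integral>\<omega>. X \<omega> * Y \<omega> \<partial>M) = 0"
proof -
  have "(\<integral>\<omega>. Y \<omega> * max 0 (X \<omega>) \<partial>M) = (\<integral>\<omega>. Y \<omega> * max 0 (- X \<omega>) \<partial>M)"
  proof (rule integral_mult_eq_if_indicator_integrals_eq)
    fix B :: "real set" assume [measurable]: "B \<in> sets borel"
    have "(\<integral>\<omega>. indicator B (Y \<omega>) * max 0 (X \<omega>) \<partial>M) - (\<integral>\<omega>. indicator B (Y \<omega>) * max 0 (- X \<omega>) \<partial>M)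
       = (\<integral>\<omega>. indicator B (Y \<omega>) * X \<omega> \<partial>M)"
      by (subst Bochner_Integration.integral_diff[symmetric])
         (auto intro!: Bochner_Integration.integrable_bound[OF \<open>integrable M X\<close>]
               Bochner_Integration.integral_cong simp: indicator_def abs_ge_self abs_ge_minus_self)
    also have "\<dots> = 0"
      by (rule integral_indicator_mult_eq_0_if_cond_indep) (use assms in auto)
    finally show "(\<integral>\<omega>. indicator B (Y \<omega>) * max 0 (X \<omega>) \<partial>M) = (\<integral>\<omega>. indicator B (Y \<omega>) * max 0 (- X \<omega>) \<partial>M)"
      by simp
  qed (auto intro: Bochner_Integration.integrable_bound[OF \<open>integrable M X\<close>])
  moreover have "(\<integral>\<omega>. X \<omega> * Y \<omega> \<partial>M) = (\<integral>\<omega>. Y \<omega> * max 0 (X \<omega>) \<partial>M) - (\<integral>\<omega>. Y \<omega> * max 0 (- X \<omega>) \<partial>M)"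
    by (subst Bochner_Integration.integral_diff[symmetric])
       (auto intro!: Bochner_Integration.integrable_bound[OF integrable_XY]
             Bochner_Integration.integral_cong simp: max_def abs_mult mult_nonpos_nonneg)
  ultimately show ?thesis
    by simp
qed

lemma integrable_inner_Basis:
  fixes u :: "'a \<Rightarrow> 'v::euclidean_space"
  assumes "u \<in> borel_measurable M" "integrable M (\<lambda>\<omega>. (norm (u \<omega>))\<^sup>2)"
  shows "integrable M (\<lambda>\<omega>. u \<omega> \<bullet> b)"
  using integrable_inner_square_integrable[of u M "\<lambda>_. b"] assms by simp

lemma real_cond_exp_inner_diff_eq_0:
  fixes g a :: "'a \<Rightarrow> 'v::euclidean_space"
  assumes [measurable]: "g \<in> borel_measurable M" "a \<in> borel_measurable F"
    and "integrable M (\<lambda>\<omega>. (norm (g \<omega>))\<^sup>2)" "integrable M (\<lambda>\<omega>. (norm (a \<omega>))\<^sup>2)"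
    and unbiased: "AE \<omega> in M. real_cond_exp M F (\<lambda>\<omega>. g \<omega> \<bullet> b) \<omega> = a \<omega> \<bullet> b"
  shows "AE \<omega> in M. real_cond_exp M F (\<lambda>\<omega>. (g \<omega> - a \<omega>) \<bullet> b) \<omega> = 0"
proof -
  have [measurable]: "a \<in> borel_measurable M"
    by (rule measurable_from_subalg[OF subalg assms(2)])
  have integrable: "integrable M (\<lambda>\<omega>. g \<omega> \<bullet> b)" "integrable M (\<lambda>\<omega>. a \<omega> \<bullet> b)"
    using assms by (auto intro: integrable_inner_Basis)
  have "AE \<omega> in M. real_cond_exp M F (\<lambda>\<omega>. g \<omega> \<bullet> b - a \<omega> \<bullet> b) \<omega>
      = real_cond_exp M F (\<lambda>\<omega>. g \<omega> \<bullet> b) \<omega> - real_cond_exp M F (\<lambda>\<omega>. a \<omega> \<bullet> b) \<omega>"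
    by (rule real_cond_exp_diff[OF integrable])
  moreover have "AE \<omega> in M. real_cond_exp M F (\<lambda>\<omega>. a \<omega> \<bullet> b) \<omega> = a \<omega> \<bullet> b"
    by (rule real_cond_exp_F_meas[OF integrable(2)]) measurable
  ultimately show ?thesis
    using unbiased by eventually_elim (simp add: inner_diff_left)
qed

lemma integral_inner_eq_0_if_cond_centred:
  fixes a \<xi> :: "'a \<Rightarrow> 'v::euclidean_space"
  assumes [measurable]: "a \<in> borel_measurable F" "\<xi> \<in> borel_measurable M"
    and "integrable M (\<lambda>\<omega>. (norm (a \<omega>))\<^sup>2)" "integrable M (\<lambda>\<omega>. (norm (\<xi> \<omega>))\<^sup>2)"
    and centred: "\<And>b. b \<in> Basis \<Longrightarrow> AE \<omega> in M. real_cond_exp M F (\<lambda>\<omega>. \<xi> \<omega> \<bullet> b) \<omega> = 0"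
  shows "(\<integral>\<omega>. a \<omega> \<bullet> \<xi> \<omega> \<partial>M) = 0"
proof -
  have [measurable]: "a \<in> borel_measurable M"
    by (rule measurable_from_subalg[OF subalg assms(1)])
  have integrable: "integrable M (\<lambda>\<omega>. (a \<omega> \<bullet> b) * (\<xi> \<omega> \<bullet> b))" if "b \<in> Basis" for b
    using assms that by (intro integrable_inner_Basis_mult_square_integrable) auto
  have "(\<integral>\<omega>. (a \<omega> \<bullet> b) * (\<xi> \<omega> \<bullet> b) \<partial>M) = 0" if "b \<in> Basis" for b
    by (rule integral_mult_eq_0_if_real_cond_exp_eq_0[OF _ _ integrable centred]) (use that in auto)
  then show ?thesis
    by (simp add: integral_inner_eq_sum_Basis[OF integrable])
qed

lemma integral_inner_eq_0_if_cond_indep: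
  fixes \<xi> :: "'i \<Rightarrow> 'a \<Rightarrow> 'v::euclidean_space"
  assumes indep: "cond_indep_vars M F \<xi> I" and "i \<in> I" "j \<in> I" "i \<noteq> j"
    and [measurable]: "\<xi> i \<in> borel_measurable M" "\<xi> j \<in> borel_measurable M"
    and "integrable M (\<lambda>\<omega>. (norm (\<xi> i \<omega>))\<^sup>2)" "integrable M (\<lambda>\<omega>. (norm (\<xi> j \<omega>))\<^sup>2)"
    and centred: "\<And>b. b \<in> Basis \<Longrightarrow> AE \<omega> in M. real_cond_exp M F (\<lambda>\<omega>. \<xi> i \<omega> \<bullet> b) \<omega> = 0"
  shows "(\<integral>\<omega>. \<xi> i \<omega> \<bullet> \<xi> j \<omega> \<partial>M) = 0"
proof -
  have integrable: "integrable M (\<lambda>\<omega>. (\<xi> i \<omega> \<bullet> b) * (\<xi> j \<omega> \<bullet> b))" if "b \<in> Basis" for b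
    using assms that by (intro integrable_inner_Basis_mult_square_integrable) auto
  have "(\<integral>\<omega>. (\<xi> i \<omega> \<bullet> b) * (\<xi> j \<omega> \<bullet> b) \<partial>M) = 0" if b: "b \<in> Basis" for b
  proof (rule integral_mult_eq_0_if_cond_indep)
    fix A B :: "real set" assume "A \<in> sets borel" "B \<in> sets borel"
    define S where "S k = (if k = i then (\<lambda>v. v \<bullet> b) -` A else (\<lambda>v. v \<bullet> b) -` B)" for k
    have "\<forall>k\<in>{i, j}. S k \<in> sets borel"
      unfolding S_def using \<open>A \<in> sets borel\<close> \<open>B \<in> sets borel\<close>
      by (auto intro!: measurable_sets_borel[of "\<lambda>v::'v. v \<bullet> b"])
    then have "AE \<omega> in M. real_cond_exp M F (\<lambda>\<omega>. \<Prod>k\<in>{i, j}. indicator (S k) (\<xi> k \<omega>)) \<omega>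
        = (\<Prod>k\<in>{i, j}. real_cond_exp M F (\<lambda>\<omega>. indicator (S k) (\<xi> k \<omega>)) \<omega>)"
      using indep \<open>i \<in> I\<close> \<open>j \<in> I\<close> unfolding cond_indep_vars_def by auto
    moreover have "(\<lambda>\<omega>. \<Prod>k\<in>{i, j}. indicator (S k) (\<xi> k \<omega>) :: real)
        = (\<lambda>\<omega>. indicator A (\<xi> i \<omega> \<bullet> b) * indicator B (\<xi> j \<omega> \<bullet> b))"
      using \<open>i \<noteq> j\<close> by (auto simp: S_def fun_eq_iff indicator_def)
    moreover have "(\<lambda>\<omega>. indicator (S i) (\<xi> i \<omega>) :: real) = (\<lambda>\<omega>. indicator A (\<xi> i \<omega> \<bullet> b))"
      by (auto simp: S_def fun_eq_iff indicator_def)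
    moreover have "(\<lambda>\<omega>. indicator (S j) (\<xi> j \<omega>) :: real) = (\<lambda>\<omega>. indicator B (\<xi> j \<omega> \<bullet> b))"
      using \<open>i \<noteq> j\<close> by (auto simp: S_def fun_eq_iff indicator_def)
    ultimately show "AE \<omega> in M. real_cond_exp M F (\<lambda>\<omega>. indicator A (\<xi> i \<omega> \<bullet> b) * indicator B (\<xi> j \<omega> \<bullet> b)) \<omega>
        = real_cond_exp M F (\<lambda>\<omega>. indicator A (\<xi> i \<omega> \<bullet> b)) \<omega>
          * real_cond_exp M F (\<lambda>\<omega>. indicator B (\<xi> j \<omega> \<bullet> b)) \<omega>"
      using \<open>i \<noteq> j\<close> by simp
  qed (use assms b integrable in \<open>auto intro: integrable_inner_Basis\<close>)
  then show ?thesis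
    by (simp add: integral_inner_eq_sum_Basis[OF integrable])
qed

end

lemma (in finite_measure_subalgebra) integral_inner_average_eq_0_if_cond_centred:
  fixes a :: "'a \<Rightarrow> 'v::euclidean_space" and \<xi> :: "'i \<Rightarrow> 'a \<Rightarrow> 'v"
  assumes [measurable]: "a \<in> borel_measurable F" "\<And>i. i \<in> I \<Longrightarrow> \<xi> i \<in> borel_measurable M"
    and square_integrable: "integrable M (\<lambda>\<omega>. (norm (a \<omega>))\<^sup>2)"
      "\<And>i. i \<in> I \<Longrightarrow> integrable M (\<lambda>\<omega>. (norm (\<xi> i \<omega>))\<^sup>2)"
    and centred: "\<And>i b. i \<in> I \<Longrightarrow> b \<in> Basis \<Longrightarrow> AE \<omega> in M. real_cond_exp M F (\<lambda>\<omega>. \<xi> i \<omega> \<bullet> b) \<omega> = 0"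
  defines "\<eta> \<omega> \<equiv> (1 / card I) *\<^sub>R (\<Sum>i\<in>I. \<xi> i \<omega>)"
  shows "integrable M (\<lambda>\<omega>. a \<omega> \<bullet> \<eta> \<omega>)" "(\<integral>\<omega>. a \<omega> \<bullet> \<eta> \<omega> \<partial>M) = 0"
proof -
  have [measurable]: "a \<in> borel_measurable M"
    by (rule measurable_from_subalg[OF subalg]) measurable
  have integrable: "integrable M (\<lambda>\<omega>. a \<omega> \<bullet> \<xi> i \<omega>)" if "i \<in> I" for i
    using that by (intro integrable_inner_square_integrable square_integrable) auto
  have a_\<eta>: "a \<omega> \<bullet> \<eta> \<omega> = (1 / card I) * (\<Sum>i\<in>I. a \<omega> \<bullet> \<xi> i \<omega>)" for \<omega>
    by (simp add: \<eta>_def inner_sum_right)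
  then show "integrable M (\<lambda>\<omega>. a \<omega> \<bullet> \<eta> \<omega>)"
    using integrable by simp
  show "(\<integral>\<omega>. a \<omega> \<bullet> \<eta> \<omega> \<partial>M) = 0"
    unfolding a_\<eta> using integrable
    by (simp add: Bochner_Integration.integral_sum integral_inner_eq_0_if_cond_centred
        square_integrable centred)
qed

locale prob_space_subalgebra = prob_space M + finite_measure_subalgebra M F
  for M :: "'a measure" and F :: "'a measure"

lemma (in prob_space_subalgebra) integral_norm_average_le_if_cond_indep:
  fixes \<xi> :: "'i \<Rightarrow> 'a \<Rightarrow> 'v::euclidean_space"
  assumes "finite I" "I \<noteq> {}"
    and [measurable]: "\<And>i. i \<in> I \<Longrightarrow> \<xi> i \<in> borel_measurable M"
    and square_integrable: "\<And>i. i \<in> I \<Longrightarrow> integrable M (\<lambda>\<omega>. (norm (\<xi> i \<omega>))\<^sup>2)"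
    and centred: "\<And>i b. i \<in> I \<Longrightarrow> b \<in> Basis \<Longrightarrow> AE \<omega> in M. real_cond_exp M F (\<lambda>\<omega>. \<xi> i \<omega> \<bullet> b) \<omega> = 0"
    and variance: "\<And>i. i \<in> I \<Longrightarrow> AE \<omega> in M. real_cond_exp M F (\<lambda>\<omega>. (norm (\<xi> i \<omega>))\<^sup>2) \<omega> \<le> \<sigma>\<^sup>2"
    and indep: "cond_indep_vars M F \<xi> I"
  defines "\<eta> \<omega> \<equiv> (1 / card I) *\<^sub>R (\<Sum>i\<in>I. \<xi> i \<omega>)"
  shows "integrable M (\<lambda>\<omega>. (norm (\<eta> \<omega>))\<^sup>2)" "(\<integral>\<omega>. (norm (\<eta> \<omega>))\<^sup>2 \<partial>M) \<le> \<sigma>\<^sup>2 / card I"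
proof -
  have "(\<integral>\<omega>. (norm (\<xi> i \<omega>))\<^sup>2 \<partial>M) \<le> (\<integral>\<omega>. \<sigma>\<^sup>2 \<partial>M)" if "i \<in> I" for i
    using that by (intro integral_le_if_real_cond_exp_le variance square_integrable) auto
  then have variance_le: "(\<integral>\<omega>. (norm (\<xi> i \<omega>))\<^sup>2 \<partial>M) \<le> \<sigma>\<^sup>2" if "i \<in> I" for i
    using that by (simp add: prob_space)
  have uncorrelated: "(\<integral>\<omega>. \<xi> i \<omega> \<bullet> \<xi> j \<omega> \<partial>M) = 0" if "i \<in> I" "j \<in> I" "i \<noteq> j" for i j
    using that by (intro integral_inner_eq_0_if_cond_indep[OF indep] square_integrable centred) auto
  note sum_bounds = integral_norm_sum_squared_le[OF \<open>finite I\<close> _ square_integrable uncorrelated variance_le]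
  have norm_\<eta>: "(norm (\<eta> \<omega>))\<^sup>2 = (norm (\<Sum>i\<in>I. \<xi> i \<omega>))\<^sup>2 / (card I)\<^sup>2" for \<omega>
    by (simp add: \<eta>_def power_divide)
  then show "integrable M (\<lambda>\<omega>. (norm (\<eta> \<omega>))\<^sup>2)"
    using sum_bounds(1) by simp
  have "(\<integral>\<omega>. (norm (\<eta> \<omega>))\<^sup>2 \<partial>M) = (\<integral>\<omega>. (norm (\<Sum>i\<in>I. \<xi> i \<omega>))\<^sup>2 \<partial>M) / (card I)\<^sup>2"
    unfolding norm_\<eta> by simp
  also have "\<dots> \<le> card I * \<sigma>\<^sup>2 / (card I)\<^sup>2"
    using sum_bounds(2) by (simp add: divide_right_mono)
  also have "\<dots> = \<sigma>\<^sup>2 / card I"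
    using \<open>finite I\<close> \<open>I \<noteq> {}\<close> by (simp add: power2_eq_square)
  finally show "(\<integral>\<omega>. (norm (\<eta> \<omega>))\<^sup>2 \<partial>M) \<le> \<sigma>\<^sup>2 / card I" .
qed

section \<open>The server step\<close>

lemma continuous_on_if_gderiv:
  assumes "\<And>y. GDERIV f y :> gradf y"
  shows "continuous_on S f"
  using assms unfolding gderiv_def
  by (intro has_derivative_continuous_on) (auto intro: has_derivative_at_withinI)

lemma borel_measurable_gradient:
  fixes f :: "'v::euclidean_space \<Rightarrow> real"
  assumes grad: "\<And>y. GDERIV f y :> gradf y"
  shows "gradf \<in> borel_measurable borel"
proof -
  have [measurable]: "f \<in> borel_measurable borel"
    by (rule borel_measurable_continuous_onI[OF continuous_on_if_gderiv[OF grad]])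
  have "(\<lambda>y. gradf y \<bullet> b) \<in> borel_measurable borel" for b
  proof (rule borel_measurable_LIMSEQ_real)
    fix y
    have "((\<lambda>t. y + t *\<^sub>R b) has_derivative (\<lambda>t. t *\<^sub>R b)) (at 0)"
      by (auto intro!: derivative_eq_intros)
    moreover have "(f has_derivative (\<lambda>h. h \<bullet> gradf y)) (at (y + 0 *\<^sub>R b))"
      using grad[of y] unfolding gderiv_def by simp
    ultimately have "((\<lambda>t. f (y + t *\<^sub>R b)) has_derivative (\<lambda>t. (t *\<^sub>R b) \<bullet> gradf y)) (at 0)"
      by (rule has_derivative_compose)
    moreover have "(\<lambda>t. (t *\<^sub>R b) \<bullet> gradf y) = (*) (gradf y \<bullet> b)"
      by (auto simp: fun_eq_iff inner_commute)
    ultimately have "((\<lambda>t. f (y + t *\<^sub>R b)) has_field_derivative (gradf y \<bullet> b)) (at 0)"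
      unfolding has_field_derivative_def by simp
    then have "((\<lambda>t. (f (y + t *\<^sub>R b) - f y) / t) \<longlongrightarrow> gradf y \<bullet> b) (at 0)"
      by (simp add: has_field_derivative_iff)
    moreover have "filterlim (\<lambda>k::nat. 1 / real (Suc k)) (at 0) sequentially"
      using LIMSEQ_inverse_real_of_nat by (auto simp: filterlim_at inverse_eq_divide)
    ultimately show "(\<lambda>k. (f (y + (1 / real (Suc k)) *\<^sub>R b) - f y) / (1 / real (Suc k)))
        \<longlonglongrightarrow> gradf y \<bullet> b"
      by (rule filterlim_compose)
  qed measurable
  then show ?thesis
    by (subst borel_measurable_euclidean_space) auto
qed

lemma smooth_gradient_step_le:
  fixes f :: "'v::real_inner \<Rightarrow> real"
  assumes smooth: "\<And>u y. f u \<le> f y + gradf y \<bullet> (u - y) + L / 2 * (norm (u - y))\<^sup>2"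
  shows "f (y - \<gamma> *\<^sub>R (gradf y + e))
    \<le> f y + (L * \<gamma>\<^sup>2 / 2 - \<gamma>) * (norm (gradf y))\<^sup>2 + (L * \<gamma>\<^sup>2 - \<gamma>) * (gradf y \<bullet> e)
        + L * \<gamma>\<^sup>2 / 2 * (norm e)\<^sup>2"
proof -
  have step: "(y - \<gamma> *\<^sub>R (gradf y + e)) - y = - \<gamma> *\<^sub>R (gradf y + e)"
    by simp
  have inner: "gradf y \<bullet> (- \<gamma> *\<^sub>R (gradf y + e)) = - \<gamma> * ((norm (gradf y))\<^sup>2 + gradf y \<bullet> e)"
    by (simp add: inner_add_right power2_norm_eq_inner)
  have norm: "(norm (- \<gamma> *\<^sub>R (gradf y + e)))\<^sup>2
      = \<gamma>\<^sup>2 * ((norm (gradf y))\<^sup>2 + 2 * (gradf y \<bullet> e) + (norm e)\<^sup>2)"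
    unfolding power2_norm_eq_inner
    by (simp add: inner_add_left inner_add_right inner_commute power2_eq_square algebra_simps)
  show ?thesis
    using smooth[of "y - \<gamma> *\<^sub>R (gradf y + e)" y] unfolding step inner norm
    by (simp add: algebra_simps)
qed

lemma uniform_weights_unit_simplex:
  fixes h :: "nat \<Rightarrow> 'v::real_vector"
  assumes "S \<subseteq> {1..n}" "S \<noteq> {}"
  shows "(\<lambda>i. if i \<in> S then 1 / card S else 0) \<in> unit_simplex n"
    and "(\<Sum>i=1..n. (if i \<in> S then 1 / card S else 0) *\<^sub>R h i) = (1 / card S) *\<^sub>R (\<Sum>i\<in>S. h i)"
proof -
  have "finite S"
    using assms(1) finite_subset by blast
  have restrict: "{1..n} \<inter> S = S"
    using assms(1) by auto
  have "(\<Sum>i=1..n. (if i \<in> S then 1 / card S else 0) *\<^sub>R h i) = (\<Sum>i=1..n. if i \<in> S then (1 / card S) *\<^sub>R h i else 0)"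
    by (rule sum.cong) auto
  also have "\<dots> = (\<Sum>i\<in>{1..n} \<inter> S. (1 / card S) *\<^sub>R h i)"
    by (rule sum.inter_restrict[symmetric]) simp
  finally show "(\<Sum>i=1..n. (if i \<in> S then 1 / card S else 0) *\<^sub>R h i) = (1 / card S) *\<^sub>R (\<Sum>i\<in>S. h i)"
    by (simp only: restrict scaleR_sum_right)
  have "(\<Sum>i=1..n. if i \<in> S then 1 / card S else 0) = (\<Sum>i\<in>{1..n} \<inter> S. 1 / card S :: real)"
    by (rule sum.inter_restrict[symmetric]) simp
  also have "\<dots> = 1"
    unfolding restrict using \<open>finite S\<close> assms(2) by simp
  finally show "(\<lambda>i. if i \<in> S then 1 / card S else 0) \<in> unit_simplex n"
    unfolding unit_simplex_def by auto
qed

lemma bdd_below_image_unit_simplex: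
  fixes \<phi> :: "'v::euclidean_space \<Rightarrow> real"
  assumes "continuous_on UNIV \<phi>"
  shows "bdd_below ((\<lambda>v. \<phi> (\<Sum>i=1..n. v i *\<^sub>R h i)) ` unit_simplex n)"
proof -
  define K where "K = convex hull (h ` {1..n})"
  have "bdd_below (\<phi> ` K)"
    unfolding K_def using assms
    by (intro bounded_imp_bdd_below compact_imp_bounded compact_continuous_image compact_convex_hull
        finite_imp_compact) (auto intro: continuous_on_subset)
  moreover have "(\<Sum>i=1..n. v i *\<^sub>R h i) \<in> K" if "v \<in> unit_simplex n" for v
    using that unfolding K_def unit_simplex_def
    by (intro convex_sum[OF _ convex_convex_hull]) (auto intro: hull_inc)
  then have "(\<lambda>v. \<phi> (\<Sum>i=1..n. v i *\<^sub>R h i)) ` unit_simplex n \<subseteq> \<phi> ` K"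
    by auto
  ultimately show ?thesis
    by (rule bdd_below_mono)
qed

lemma cInf_unit_simplex_le_average:
  fixes \<phi> :: "'v::euclidean_space \<Rightarrow> real"
  assumes "continuous_on UNIV \<phi>" "S \<subseteq> {1..n}" "S \<noteq> {}"
  shows "Inf ((\<lambda>v. \<phi> (\<Sum>i=1..n. v i *\<^sub>R h i)) ` unit_simplex n) \<le> \<phi> ((1 / card S) *\<^sub>R (\<Sum>i\<in>S. h i))"
  using cInf_lower[OF imageI[OF uniform_weights_unit_simplex(1)[OF assms(2,3)]]
      bdd_below_image_unit_simplex[OF assms(1)]]
  unfolding uniform_weights_unit_simplex(2)[OF assms(2,3)] .

lemma cInf_unit_simplex_le_smooth_bound:
  fixes f :: "'v::euclidean_space \<Rightarrow> real" and h :: "nat \<Rightarrow> 'v" and z :: 'v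
  assumes grad: "\<And>y. GDERIV f y :> gradf y"
    and smooth: "\<And>u y. f u \<le> f y + gradf y \<bullet> (u - y) + L / 2 * (norm (u - y))\<^sup>2"
    and "S \<subseteq> {1..n}" "S \<noteq> {}"
  defines "e \<equiv> (1 / card S) *\<^sub>R (\<Sum>i\<in>S. h i - gradf z)"
  shows "Inf ((\<lambda>v. f (z - \<gamma> *\<^sub>R (\<Sum>i=1..n. v i *\<^sub>R h i))) ` unit_simplex n)
    \<le> f z + (L * \<gamma>\<^sup>2 / 2 - \<gamma>) * (norm (gradf z))\<^sup>2 + (L * \<gamma>\<^sup>2 - \<gamma>) * (gradf z \<bullet> e)
        + L * \<gamma>\<^sup>2 / 2 * (norm e)\<^sup>2"
proof -
  have "finite S"
    using assms(3) finite_subset by blast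
  have "continuous_on UNIV (\<lambda>y. f (z - \<gamma> *\<^sub>R y))"
    by (intro continuous_on_compose2[OF continuous_on_if_gderiv[OF grad]] continuous_intros) auto
  then have "Inf ((\<lambda>v. f (z - \<gamma> *\<^sub>R (\<Sum>i=1..n. v i *\<^sub>R h i))) ` unit_simplex n)
      \<le> f (z - \<gamma> *\<^sub>R ((1 / card S) *\<^sub>R (\<Sum>i\<in>S. h i)))"
    by (rule cInf_unit_simplex_le_average[OF _ assms(3,4)])
  also have "(1 / card S) *\<^sub>R (\<Sum>i\<in>S. h i) = gradf z + e"
    using \<open>finite S\<close> assms(4)
    by (simp add: e_def sum_subtractf scaleR_diff_right sum_constant_scaleR)
  also have "f (z - \<gamma> *\<^sub>R (gradf z + e))
      \<le> f z + (L * \<gamma>\<^sup>2 / 2 - \<gamma>) * (norm (gradf z))\<^sup>2 + (L * \<gamma>\<^sup>2 - \<gamma>) * (gradf z \<bullet> e)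
        + L * \<gamma>\<^sup>2 / 2 * (norm e)\<^sup>2"
    by (rule smooth_gradient_step_le[OF smooth])
  finally show ?thesis .
qed

lemma descent_coefficients_le:
  fixes \<gamma> L A V c :: real
  assumes "0 < \<gamma>" "\<gamma> \<le> 1 / (2 * L)" "0 \<le> A" "V \<le> c" "0 \<le> c"
  shows "(L * \<gamma>\<^sup>2 / 2 - \<gamma>) * A + L * \<gamma>\<^sup>2 / 2 * V \<le> - \<gamma> / 2 * A + \<gamma>\<^sup>2 * L * c"
proof -
  have "0 < L"
    using assms(1,2) by (smt (verit) divide_nonneg_nonpos)
  then have "L * \<gamma> \<le> 1 / 2"
    using assms(2) by (simp add: field_simps)
  then have "(L * \<gamma>) * \<gamma> \<le> 1 / 2 * \<gamma>"
    using assms(1) by (intro mult_right_mono) auto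
  moreover have "L * \<gamma>\<^sup>2 = (L * \<gamma>) * \<gamma>"
    by (simp add: power2_eq_square)
  ultimately have "L * \<gamma>\<^sup>2 / 2 - \<gamma> \<le> - \<gamma> / 2"
    using assms(1) by linarith
  then have "(L * \<gamma>\<^sup>2 / 2 - \<gamma>) * A \<le> - \<gamma> / 2 * A"
    using assms(3) by (rule mult_right_mono)
  moreover have "L * \<gamma>\<^sup>2 / 2 * V \<le> L * \<gamma>\<^sup>2 / 2 * c"
    using \<open>0 < L\<close> assms(4) by (intro mult_left_mono) auto
  moreover have "L * \<gamma>\<^sup>2 / 2 * c \<le> \<gamma>\<^sup>2 * L * c"
    using \<open>0 < L\<close> assms(5) by simp
  ultimately show ?thesis
    by linarith
qed

theorem mainTheorem2:
  fixes M :: "'a measure"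
    and f :: "'v::euclidean_space \<Rightarrow> real" and gradf :: "'v \<Rightarrow> 'v"
    and n :: nat and Gs :: "nat set"
    and x x' :: "'a \<Rightarrow> 'v" and g :: "nat \<Rightarrow> 'a \<Rightarrow> 'v" and w :: "nat \<Rightarrow> 'a \<Rightarrow> real"
    and \<gamma> L \<sigma> \<delta> :: real
  assumes prob: "prob_space M"
    and gamma_pos: "\<gamma> > 0" and delta_nonneg: "\<delta> \<ge> 0"
    and gamma_le: "\<gamma> \<le> 1 / (2 * L)"
    and Gs_sub: "Gs \<subseteq> {1..n}" and Gs_ne: "Gs \<noteq> {}"
    and x_meas: "x \<in> borel_measurable M"
    and g_meas: "\<And>i. i \<in> {1..n} \<Longrightarrow> g i \<in> borel_measurable M"
    and w_simplex: "\<And>\<omega>. \<omega> \<in> space M \<Longrightarrow> (\<lambda>i. w i \<omega>) \<in> unit_simplex n"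
    and update: "\<And>\<omega>. \<omega> \<in> space M \<Longrightarrow>
                   x' \<omega> = x \<omega> - \<gamma> *\<^sub>R (\<Sum>i=1..n. w i \<omega> *\<^sub>R g i \<omega>)"
    and grad: "\<And>y. GDERIV f y :> gradf y"
    and unbiased: "\<And>i b. i \<in> Gs \<Longrightarrow> b \<in> Basis \<Longrightarrow>
          AE \<omega> in M. real_cond_exp M (gen_sigma M {x}) (\<lambda>\<omega>. g i \<omega> \<bullet> b) \<omega> = gradf (x \<omega>) \<bullet> b"
    and variance: "\<And>i. i \<in> Gs \<Longrightarrow>
          AE \<omega> in M. real_cond_exp M (gen_sigma M {x}) (\<lambda>\<omega>. (norm (g i \<omega> - gradf (x \<omega>)))\<^sup>2) \<omega> \<le> \<sigma>\<^sup>2"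
    and indep: "cond_indep_vars M (gen_sigma M {x}) (\<lambda>i \<omega>. g i \<omega> - gradf (x \<omega>)) Gs"
    and smooth: "\<And>u y. f u \<le> f y + gradf y \<bullet> (u - y) + L / 2 * (norm (u - y))\<^sup>2"
    and subproblem: "AE \<omega> in M.
          real_cond_exp M (gen_sigma M (insert x (g ` {1..n}))) (\<lambda>\<omega>. f (x' \<omega>)) \<omega>
          - Inf ((\<lambda>v. f (x \<omega> - \<gamma> *\<^sub>R (\<Sum>i=1..n. v i *\<^sub>R g i \<omega>))) ` unit_simplex n) \<le> \<delta>"
    and int_fx: "integrable M (\<lambda>\<omega>. f (x \<omega>))"
    and int_fx': "integrable M (\<lambda>\<omega>. f (x' \<omega>))"
    and int_grad: "integrable M (\<lambda>\<omega>. (norm (gradf (x \<omega>)))\<^sup>2)"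
    and int_g: "\<And>i. i \<in> Gs \<Longrightarrow> integrable M (\<lambda>\<omega>. (norm (g i \<omega>))\<^sup>2)"
  shows "(\<integral>\<omega>. f (x' \<omega>) \<partial>M)
           \<le> (\<integral>\<omega>. f (x \<omega>) \<partial>M) - \<gamma> / 2 * (\<integral>\<omega>. (norm (gradf (x \<omega>)))\<^sup>2 \<partial>M)
              + \<gamma>\<^sup>2 * L * \<sigma>\<^sup>2 / real (card Gs) + \<delta>"
proof -
  interpret prob_space M
    by (rule prob)
  interpret prob_space_subalgebra M "gen_sigma M {x}"
    using finite_measure_subalgebra_gen_sigma[of "{x}"] x_meas
    by (auto simp: prob_space_subalgebra_def finite_measure_subalgebra_def prob_space_axioms)
  have "finite Gs"
    using Gs_sub finite_subset by blast
  have [measurable]: "gradf \<in> borel_measurable borel" "x \<in> borel_measurable (gen_sigma M {x})"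
    "x \<in> borel_measurable M" "\<And>i. i \<in> Gs \<Longrightarrow> g i \<in> borel_measurable M"
    using borel_measurable_gradient[OF grad] measurable_gen_sigma[of x "{x}"] x_meas g_meas Gs_sub
    by auto
  have centred: "AE \<omega> in M. real_cond_exp M (gen_sigma M {x}) (\<lambda>\<omega>. (g i \<omega> - gradf (x \<omega>)) \<bullet> b) \<omega> = 0"
    if "i \<in> Gs" "b \<in> Basis" for i b
    using that unbiased int_g int_grad by (intro real_cond_exp_inner_diff_eq_0) auto
  have square_integrable: "integrable M (\<lambda>\<omega>. (norm (g i \<omega> - gradf (x \<omega>)))\<^sup>2)" if "i \<in> Gs" for i
    using that int_g int_grad by (intro integrable_norm_diff_square_integrable) auto
  have grad_x_meas: "(\<lambda>\<omega>. gradf (x \<omega>)) \<in> borel_measurable (gen_sigma M {x})"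
    and noise_meas: "\<And>i. i \<in> Gs \<Longrightarrow> (\<lambda>\<omega>. g i \<omega> - gradf (x \<omega>)) \<in> borel_measurable M"
    by measurable
  define \<eta> where "\<eta> \<omega> = (1 / card Gs) *\<^sub>R (\<Sum>i\<in>Gs. g i \<omega> - gradf (x \<omega>))" for \<omega>
  note inner_\<eta> = integral_inner_average_eq_0_if_cond_centred
      [where I = Gs and \<xi> = "\<lambda>i \<omega>. g i \<omega> - gradf (x \<omega>)",
       OF grad_x_meas noise_meas int_grad square_integrable centred, folded \<eta>_def]
  note norm_\<eta> = integral_norm_average_le_if_cond_indep
      [where I = Gs and \<xi> = "\<lambda>i \<omega>. g i \<omega> - gradf (x \<omega>)",
       OF \<open>finite Gs\<close> Gs_ne noise_meas square_integrable centred variance indep, folded \<eta>_def]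
  define Q where "Q \<omega> = f (x \<omega>) + (L * \<gamma>\<^sup>2 / 2 - \<gamma>) * (norm (gradf (x \<omega>)))\<^sup>2
    + (L * \<gamma>\<^sup>2 - \<gamma>) * (gradf (x \<omega>) \<bullet> \<eta> \<omega>) + L * \<gamma>\<^sup>2 / 2 * (norm (\<eta> \<omega>))\<^sup>2" for \<omega>
  have integrable_Q: "integrable M Q"
    unfolding Q_def using int_fx int_grad inner_\<eta>(1) norm_\<eta>(1) by simp
  have "AE \<omega> in M. real_cond_exp M (gen_sigma M (insert x (g ` {1..n}))) (\<lambda>\<omega>. f (x' \<omega>)) \<omega> \<le> \<delta> + Q \<omega>"
    using subproblem
  proof eventually_elim
    case (elim \<omega>)
    then show ?case
      using cInf_unit_simplex_le_smooth_bound[OF grad smooth Gs_sub Gs_ne, of "x \<omega>" \<gamma> "\<lambda>i. g i \<omega>"]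
      unfolding Q_def \<eta>_def by linarith
  qed
  moreover have "finite_measure_subalgebra M (gen_sigma M (insert x (g ` {1..n})))"
    using x_meas g_meas by (intro finite_measure_subalgebra_gen_sigma) auto
  ultimately have "(\<integral>\<omega>. f (x' \<omega>) \<partial>M) \<le> (\<integral>\<omega>. \<delta> + Q \<omega> \<partial>M)"
    using int_fx' integrable_Q by (intro finite_measure_subalgebra.integral_le_if_real_cond_exp_le) auto
  moreover have "(\<integral>\<omega>. \<delta> + Q \<omega> \<partial>M) = \<delta> + (\<integral>\<omega>. f (x \<omega>) \<partial>M)
      + ((L * \<gamma>\<^sup>2 / 2 - \<gamma>) * (\<integral>\<omega>. (norm (gradf (x \<omega>)))\<^sup>2 \<partial>M)
        + L * \<gamma>\<^sup>2 / 2 * (\<integral>\<omega>. (norm (\<eta> \<omega>))\<^sup>2 \<partial>M))"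
    using int_fx int_grad inner_\<eta> norm_\<eta>(1) by (simp add: Q_def prob_space)
  moreover have "(L * \<gamma>\<^sup>2 / 2 - \<gamma>) * (\<integral>\<omega>. (norm (gradf (x \<omega>)))\<^sup>2 \<partial>M)
        + L * \<gamma>\<^sup>2 / 2 * (\<integral>\<omega>. (norm (\<eta> \<omega>))\<^sup>2 \<partial>M)
      \<le> - \<gamma> / 2 * (\<integral>\<omega>. (norm (gradf (x \<omega>)))\<^sup>2 \<partial>M) + \<gamma>\<^sup>2 * L * (\<sigma>\<^sup>2 / card Gs)"
    by (rule descent_coefficients_le[OF gamma_pos gamma_le _ norm_\<eta>(2)]) (auto intro: integral_nonneg_AE)
  moreover have "\<gamma>\<^sup>2 * L * (\<sigma>\<^sup>2 / card Gs) = \<gamma>\<^sup>2 * L * \<sigma>\<^sup>2 / card Gs"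
    by simp
  ultimately show ?thesis
    by linarith
qed

end
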